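(* Regarded as a subset of $\mathbb{RP}^1\times\mathbb{RP}^2$, the space of half-flat structures, namely $\{([x_1u_1+x_2u_2],[y_1u_1^2+y_2u_1u_2+y_3u_2^2])\colon x_1y_2+x_2(y_1-y_3)=0\}$, is (via projection onto the second factor) the blow-up of $\mathbb{RP}^2$ at $[1:0:1]$. In particular, it is connected. The points projecting onto $[1:0:1]$ correspond to Hermitian structures on $\mathfrak{so}(3,\mathbb C)$.
   Context: A pair $([\mathbf x],[\mathbf y])\in\mathbb{RP}^1\times\mathbb{RP}^2$ with $\mathbf x=x_1u_1+x_2u_2$, $\mathbf y=y_1u_1^2+y_2u_1u_2+y_3u_2^2$ determines the Lie algebra with basis $e^1,\dots,e^6$ of its dual satisfying ($e^{ij}=e^i\wedge e^j$) $de^1=(x_2y_1-x_1y_2)e^{35}-x_1y_3(e^{36}+e^{45})-x_2y_3e^{46}$, $de^3=-(x_2y_1-x_1y_2)e^{15}+x_1y_3(e^{16}+e^{25})+x_2y_3e^{26}$, $de^5=(x_2y_1-x_1y_2)e^{13}-x_1y_3(e^{14}+e^{23})-x_2y_3e^{24}$, $de^2=x_1y_1e^{35}-(x_1y_3-y_2x_2)e^{46}+x_2y_1(e^{36}+e^{45})$, $de^4=-x_1y_1e^{15}+(x_1y_3-y_2x_2)e^{26}-x_2y_1(e^{16}+e^{25})$, $de^6=x_1y_1e^{13}-(x_1y_3-y_2x_2)e^{24}+x_2y_1(e^{14}+e^{23})$, together with the left-invariant $SO(3)$-structure and $SU(3)$-structure defined by the coframe: $\sigma=e^{12}+e^{34}+e^{56}$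 and $\gamma=\tfrac43(\eta_0+\eta_1+\eta_2)$, where $\eta_j=\eta^{\theta_j}$, $\theta_j\in\{0,2\pi/3,-2\pi/3\}$, $\eta^\theta=(\cos\theta\, e^1+\sin\theta\, e^2)\wedge(\cos\theta\, e^3+\sin\theta\, e^4)\wedge(\cos\theta\, e^5+\sin\theta\, e^6)$; $\hat\gamma=J\gamma$. Its intrinsic torsion parameters are $\lambda_1=x_1y_1$, $\lambda_2=x_1y_2+x_2y_1$, $\lambda_3=x_1y_3+x_2y_2$, $\lambda_4=x_2y_3$ (with $d\hat\gamma=\tfrac12(\lambda_3-\lambda_1)\sigma^2$ and $d\sigma=\tfrac34(\lambda_1-\lambda_3)\gamma+\tfrac34(\lambda_2-\lambda_4)\hat\gamma+\beta$, $\beta$ a form of type $W_3$). The $SU(3)$-structure is half-flat if $d(\sigma^2)=0$ and $d\gamma=0$, which here means $\lambda_2=\lambda_4$; it is Hermitian if moreover $\lambda_1=\lambda_3$. *)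

theory Defs
  imports "HOL-Analysis.Analysis"
begin

text \<open>A point [v] of RP^(n-1) (v a nonzero vector of real^'n) is represented by the
  orthogonal projection onto the line spanned by v, i.e. the matrix v v^T / (v . v).
  This is the standard embedding of projective space into symmetric matrices; it is
  injective on projective classes and a homeomorphism onto its image, so the subspace
  topology of real^'n^'n gives the usual topology of RP^(n-1).\<close>

definition pt :: "real^'n \<Rightarrow> real^'n^'n" where
  "pt v = (\<chi> i j. v$i * v$j / (v \<bullet> v))"

text \<open>x = x1 u1 + x2 u2 (x$1 = x1, x$2 = x2), y = y1 u1^2 + y2 u1 u2 + y3 u2^2.\<close>

definition lam1 :: "real^2 \<Rightarrow> real^3 \<Rightarrow> real" where
  "lam1 x y = x$1 * y$1"
definition lam2 :: "real^2 \<Rightarrow> real^3 \<Rightarrow> real" where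
  "lam2 x y = x$1 * y$2 + x$2 * y$1"
definition lam3 :: "real^2 \<Rightarrow> real^3 \<Rightarrow> real" where
  "lam3 x y = x$1 * y$3 + x$2 * y$2"
definition lam4 :: "real^2 \<Rightarrow> real^3 \<Rightarrow> real" where
  "lam4 x y = x$2 * y$3"

definition hermitian :: "real^2 \<Rightarrow> real^3 \<Rightarrow> bool" where
  "hermitian x y \<longleftrightarrow> lam2 x y = lam4 x y \<and> lam1 x y = lam3 x y"

definition halfflat_set :: "((real^2^2) \<times> (real^3^3)) set" where
  "halfflat_set = {(pt x, pt y) | x y. x \<noteq> 0 \<and> y \<noteq> 0 \<and>
                     x$1 * y$2 + x$2 * (y$1 - y$3) = 0}"

text \<open>Bl_p(RP^2) = {(l, q) : l a projective line through [p], q a point of l}, with the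
  blow-down map being the second projection. A projective line in RP^2 is the
  projectivisation of a plane n^perp, represented by the point [n] of the dual RP^2.\<close>

definition blowup :: "real^3 \<Rightarrow> ((real^3^3) \<times> (real^3^3)) set" where
  "blowup p = {(pt n, pt q) | n q. n \<noteq> 0 \<and> q \<noteq> 0 \<and> n \<bullet> p = 0 \<and> n \<bullet> q = 0}"

text \<open>Vectors of the Lie algebra are elements of real^6 in the basis e_1..e_6 dual to
  e^1..e^6 (component Z$k = e^k(Z)). e^{ij}(X,Y) = X_i Y_j - X_j Y_i.\<close>

definition w2 :: "real^6 \<Rightarrow> real^6 \<Rightarrow> 6 \<Rightarrow> 6 \<Rightarrow> real" where
  "w2 X Y i j = X$i * Y$j - X$j * Y$i"

definition dE :: "real^2 \<Rightarrow> real^3 \<Rightarrow> real^6 \<Rightarrow> real^6 \<Rightarrow> real^6" where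
  "dE x y X Y = (let x1 = x$1; x2 = x$2; y1 = y$1; y2 = y$2; y3 = y$3; e = w2 X Y in
     (\<chi> k.
       if k = 1 then (x2*y1 - x1*y2) * e 3 5 - x1*y3 * (e 3 6 + e 4 5) - x2*y3 * e 4 6
       else if k = 3 then - (x2*y1 - x1*y2) * e 1 5 + x1*y3 * (e 1 6 + e 2 5) + x2*y3 * e 2 6
       else if k = 5 then (x2*y1 - x1*y2) * e 1 3 - x1*y3 * (e 1 4 + e 2 3) - x2*y3 * e 2 4
       else if k = 2 then x1*y1 * e 3 5 - (x1*y3 - y2*x2) * e 4 6 + x2*y1 * (e 3 6 + e 4 5)
       else if k = 4 then - x1*y1 * e 1 5 + (x1*y3 - y2*x2) * e 2 6 - x2*y1 * (e 1 6 + e 2 5)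
       else x1*y1 * e 1 3 - (x1*y3 - y2*x2) * e 2 4 + x2*y1 * (e 1 4 + e 2 3)))"

text \<open>Lie bracket via the convention de(X,Y) = - e([X,Y]).\<close>
definition lie_bracket :: "real^2 \<Rightarrow> real^3 \<Rightarrow> real^6 \<Rightarrow> real^6 \<Rightarrow> real^6" where
  "lie_bracket x y X Y = - dE x y X Y"

text \<open>so(3,C), regarded as a real Lie algebra: complex skew-symmetric 3x3 matrices
  with the commutator bracket. The Lie algebra of (x,y) is isomorphic to it.\<close>
definition iso_so3C :: "real^2 \<Rightarrow> real^3 \<Rightarrow> bool" where
  "iso_so3C x y \<longleftrightarrow> (\<exists>\<phi> :: real^6 \<Rightarrow> complex^3^3.
      linear \<phi> \<and> inj \<phi> \<and> range \<phi> = {A. transpose A = - A} \<and>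
      (\<forall>X Y. \<phi> (lie_bracket x y X Y) = \<phi> X ** \<phi> Y - \<phi> Y ** \<phi> X))"

end

theory Submission
  imports Defs
begin

text \<open>
  The half-flat condition \<open>x\<^sub>1 y\<^sub>2 + x\<^sub>2 (y\<^sub>1 - y\<^sub>3) = 0\<close> says that \<open>y\<close> is orthogonal to
  \<open>N x = (x\<^sub>2, x\<^sub>1, -x\<^sub>2)\<close>, and \<open>N\<close> is a linear isomorphism of \<open>\<real>\<^sup>2\<close> onto the plane
  \<open>p\<^sup>\<bottom>\<close>, \<open>p = (1, 0, 1)\<close>, whose points are the normals of the projective lines through \<open>[p]\<close>.
  Replacing \<open>[x]\<close> by \<open>[N x]\<close> therefore identifies the half-flat set with the blow-up of
  \<open>\<real>P\<^sup>2\<close> at \<open>[p]\<close>, over the second factor. The set is connected because it is the image of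
  pairs of nonzero vectors \<open>(x, w)\<close>, with \<open>w\<close> the coordinates of \<open>y\<close> in the basis
  \<open>p, N x \<times> p\<close> of \<open>(N x)\<^sup>\<bottom>\<close>.

  The Hermitian condition is a linear system in \<open>(y\<^sub>2, y\<^sub>1 - y\<^sub>3)\<close> with determinant
  \<open>x\<^sub>1\<^sup>2 + x\<^sub>2\<^sup>2 > 0\<close>, so it holds exactly when \<open>[y] = [p]\<close>. For \<open>y = c p\<close>, in the complex
  coordinates \<open>e\<^sup>1 + i e\<^sup>2, e\<^sup>3 + i e\<^sup>4, e\<^sup>5 + i e\<^sup>6\<close> the bracket becomes a nonzero complex multiple
  of the cross product on \<open>\<complex>\<^sup>3\<close>, which the hat map carries to the commutator of
  \<open>so(3, \<complex>)\<close>.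
\<close>

lemma pt_scaleR: "c \<noteq> 0 \<Longrightarrow> pt (c *\<^sub>R v) = pt v"
  by (simp add: pt_def vec_eq_iff)

lemma pt_mult_vec: "pt v *v w = ((v \<bullet> w) / (v \<bullet> v)) *\<^sub>R v"
  by (simp add: pt_def vec_eq_iff matrix_vector_mult_def inner_vec_def sum_divide_distrib
      sum_distrib_left mult_ac)

lemma pt_eq_pt_iff:
  fixes u v :: "real^'n"
  assumes "u \<noteq> 0" "v \<noteq> 0"
  shows "pt u = pt v \<longleftrightarrow> (\<exists>c. c \<noteq> 0 \<and> u = c *\<^sub>R v)"
proof
  assume "pt u = pt v"
  then have "u = ((v \<bullet> u) / (v \<bullet> v)) *\<^sub>R v"
    using pt_mult_vec[of u u] pt_mult_vec[of v u] assms(1) by simp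
  with assms(1) show "\<exists>c. c \<noteq> 0 \<and> u = c *\<^sub>R v"
    by (metis scale_zero_left)
qed (auto simp: pt_scaleR)

lemma continuous_on_pt: "continuous_on (- {0}) (pt :: real^'n \<Rightarrow> _)"
  unfolding pt_def by (intro continuous_intros) auto

text \<open>The map \<open>[v] \<mapsto> [M v]\<close> on rank-one projections (see \<open>proj_map_pt\<close>), written as a
  rational function of the entries of \<open>P\<close> so that it is visibly continuous.\<close>

definition proj_map :: "real^'n^'m \<Rightarrow> real^'n^'n \<Rightarrow> real^'m^'m" where
  "proj_map M P = (\<chi> i j. (\<Sum>k\<in>UNIV. \<Sum>l\<in>UNIV. M$i$k * P$k$l * M$j$l) /
       (\<Sum>i\<in>UNIV. \<Sum>k\<in>UNIV. \<Sum>l\<in>UNIV. M$i$k * P$k$l * M$i$l))"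

lemma proj_map_entry_pt:
  fixes M :: "real^'n^'m"
  shows "(\<Sum>k\<in>UNIV. \<Sum>l\<in>UNIV. M$i$k * pt x$k$l * M$j$l) = (M *v x)$i * (M *v x)$j / (x \<bullet> x)"
  by (simp add: pt_def matrix_vector_mult_def sum_product sum_divide_distrib mult_ac)

lemma proj_map_trace_pt:
  fixes M :: "real^'n^'m"
  shows "(\<Sum>i\<in>UNIV. \<Sum>k\<in>UNIV. \<Sum>l\<in>UNIV. M$i$k * pt x$k$l * M$i$l) = ((M *v x) \<bullet> (M *v x)) / (x \<bullet> x)"
  by (simp add: proj_map_entry_pt inner_vec_def sum_divide_distrib)

lemma proj_map_pt:
  fixes M :: "real^'n^'m"
  assumes "M *v x \<noteq> 0"
  shows "proj_map M (pt x) = pt (M *v x)"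
proof -
  have "x \<noteq> 0" using assms by auto
  then show ?thesis
    using assms proj_map_trace_pt[of M x] unfolding proj_map_def proj_map_entry_pt
    by (simp add: pt_def vec_eq_iff)
qed

lemma continuous_on_proj_map:
  fixes M :: "real^'n^'m"
  shows "continuous_on {pt x |x. M *v x \<noteq> 0} (proj_map M)"
proof -
  have "continuous_on {P. (\<Sum>i\<in>UNIV. \<Sum>k\<in>UNIV. \<Sum>l\<in>UNIV. M$i$k * P$k$l * M$i$l) \<noteq> 0} (proj_map M)"
    unfolding proj_map_def by (intro continuous_intros) auto
  moreover have "{pt x |x. M *v x \<noteq> 0} \<subseteq> {P. (\<Sum>i\<in>UNIV. \<Sum>k\<in>UNIV. \<Sum>l\<in>UNIV. M$i$k * P$k$l * M$i$l) \<noteq> 0}"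
    by (auto simp: proj_map_trace_pt)
  ultimately show ?thesis by (rule continuous_on_subset)
qed

definition pencil_normal :: "real^2^3" where
  "pencil_normal = vector [vector [0, 1], vector [1, 0], vector [0, -1]]"

definition pencil_coords :: "real^3^2" where
  "pencil_coords = vector [vector [0, 1, 0], vector [1, 0, 0]]"

lemma pencil_normal_mult_vec: "pencil_normal *v x = vector [x$2, x$1, - x$2]"
  by (simp add: vec_eq_iff forall_3 matrix_vector_mult_def sum_2 pencil_normal_def)

lemma pencil_coords_mult_vec: "pencil_coords *v n = vector [n$2, n$1]"
  by (simp add: vec_eq_iff forall_2 matrix_vector_mult_def sum_3 pencil_coords_def)

lemma inner_pencil_normal: "(pencil_normal *v x) \<bullet> y = x$1 * y$2 + x$2 * (y$1 - y$3)"
  by (simp add: pencil_normal_mult_vec inner_vec_def sum_3 algebra_simps)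

lemma pencil_coords_normal: "pencil_coords *v (pencil_normal *v x) = x"
  by (simp add: pencil_normal_mult_vec pencil_coords_mult_vec vec_eq_iff forall_2)

lemma pencil_normal_coords:
  "n \<bullet> vector [1, 0, 1] = 0 \<Longrightarrow> pencil_normal *v (pencil_coords *v n) = n"
  by (simp add: pencil_normal_mult_vec pencil_coords_mult_vec vec_eq_iff forall_3
      inner_vec_def sum_3)

lemma pencil_normal_eq_0_iff: "pencil_normal *v x = 0 \<longleftrightarrow> x = 0"
  by (metis pencil_coords_normal matrix_vector_mult_0_right)

lemma pencil_coords_eq_0_iff:
  "n \<bullet> vector [1, 0, 1] = 0 \<Longrightarrow> pencil_coords *v n = 0 \<longleftrightarrow> n = 0"
  by (metis pencil_normal_coords matrix_vector_mult_0_right)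

lemma inj_pencil_normal: "inj ((*v) pencil_normal)"
  by (metis injI pencil_coords_normal)

lemma range_pencil_normal: "range ((*v) pencil_normal) = {n. n \<bullet> vector [1, 0, 1] = 0}"
proof
  show "range ((*v) pencil_normal) \<subseteq> {n. n \<bullet> vector [1, 0, 1] = 0}"
    by (auto simp: inner_pencil_normal)
  show "{n. n \<bullet> vector [1, 0, 1] = 0} \<subseteq> range ((*v) pencil_normal)"
  proof
    fix n :: "real^3" assume "n \<in> {n. n \<bullet> vector [1, 0, 1] = 0}"
    then have "n = pencil_normal *v (pencil_coords *v n)"
      by (simp add: pencil_normal_coords)
    then show "n \<in> range ((*v) pencil_normal)" by (rule range_eqI)
  qed
qed

lemma halfflat_set_pencil:
  "halfflat_set = {(pt x, pt y) |x y. x \<noteq> 0 \<and> y \<noteq> 0 \<and> (pencil_normal *v x) \<bullet> y = 0}"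
  by (simp add: halfflat_set_def inner_pencil_normal)

lemma homeomorphism_halfflat_blowup:
  "homeomorphism halfflat_set (blowup (vector [1, 0, 1]))
     (\<lambda>(P, Q). (proj_map pencil_normal P, Q)) (\<lambda>(P, Q). (proj_map pencil_coords P, Q))"
proof (rule homeomorphismI)
  have "fst ` halfflat_set \<subseteq> {pt x |x. pencil_normal *v x \<noteq> 0}"
    by (auto simp: halfflat_set_def pencil_normal_eq_0_iff)
  then show "continuous_on halfflat_set (\<lambda>(P, Q). (proj_map pencil_normal P, Q))"
    unfolding case_prod_beta
    by (intro continuous_intros continuous_on_compose2[OF continuous_on_proj_map]) auto
  have "fst ` blowup (vector [1, 0, 1]) \<subseteq> {pt n |n. pencil_coords *v n \<noteq> 0}"
    by (auto simp: blowup_def pencil_coords_eq_0_iff)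
  then show "continuous_on (blowup (vector [1, 0, 1])) (\<lambda>(P, Q). (proj_map pencil_coords P, Q))"
    unfolding case_prod_beta
    by (intro continuous_intros continuous_on_compose2[OF continuous_on_proj_map]) auto
  show "(\<lambda>(P, Q). (proj_map pencil_normal P, Q)) ` halfflat_set \<subseteq> blowup (vector [1, 0, 1])"
    by (force simp: halfflat_set_pencil blowup_def proj_map_pt pencil_normal_eq_0_iff
        inner_pencil_normal)
  show "(\<lambda>(P, Q). (proj_map pencil_coords P, Q)) ` blowup (vector [1, 0, 1]) \<subseteq> halfflat_set"
    by (force simp: halfflat_set_pencil blowup_def proj_map_pt pencil_coords_eq_0_iff
        pencil_normal_coords)
  show "(\<lambda>(P, Q). (proj_map pencil_coords P, Q)) ((\<lambda>(P, Q). (proj_map pencil_normal P, Q)) z) = z"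
    if "z \<in> halfflat_set" for z
    using that by (auto simp: halfflat_set_def proj_map_pt pencil_normal_eq_0_iff
        pencil_coords_normal)
  show "(\<lambda>(P, Q). (proj_map pencil_normal P, Q)) ((\<lambda>(P, Q). (proj_map pencil_coords P, Q)) z) = z"
    if "z \<in> blowup (vector [1, 0, 1])" for z
    using that by (auto simp: blowup_def proj_map_pt pencil_coords_eq_0_iff
        pencil_normal_coords)
qed

text \<open>The vector \<open>(x\<^sub>1, -2 x\<^sub>2, -x\<^sub>1)\<close> is the cross product of \<open>pencil_normal *v x\<close> with
  \<open>(1, 0, 1)\<close>, so together with \<open>(1, 0, 1)\<close> it spans the plane orthogonal to \<open>pencil_normal *v x\<close>.\<close>

definition halfflat_param :: "real^2 \<Rightarrow> real^2 \<Rightarrow> real^3" where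
  "halfflat_param x w = w$1 *\<^sub>R vector [1, 0, 1] + w$2 *\<^sub>R vector [x$1, - 2 * x$2, - x$1]"

lemma inner_pencil_normal_param: "(pencil_normal *v x) \<bullet> halfflat_param x w = 0"
  by (simp add: inner_pencil_normal halfflat_param_def algebra_simps)

lemma halfflat_param_eq_0_iff:
  assumes "x \<noteq> 0"
  shows "halfflat_param x w = 0 \<longleftrightarrow> w = 0"
proof
  assume "halfflat_param x w = 0"
  then have "w$1 + w$2 * x$1 = 0" "w$2 * x$2 = 0" "w$1 - w$2 * x$1 = 0"
    by (auto simp: halfflat_param_def vec_eq_iff forall_3)
  moreover have "x$1 \<noteq> 0 \<or> x$2 \<noteq> 0"
    using assms by (auto simp: vec_eq_iff forall_2)
  ultimately show "w = 0"
    by (auto simp: vec_eq_iff forall_2)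
qed (simp add: halfflat_param_def)

lemma halfflat_param_surj:
  assumes x: "x \<noteq> 0" and y: "(pencil_normal *v x) \<bullet> y = 0"
  shows "\<exists>w. y = halfflat_param x w"
proof -
  have h: "x$1 * y$2 + x$2 * (y$1 - y$3) = 0"
    using y by (simp add: inner_pencil_normal)
  define D where "D = x$1^2 + 4 * x$2^2"
  have "x$1 \<noteq> 0 \<or> x$2 \<noteq> 0"
    using x by (auto simp: vec_eq_iff forall_2)
  then have "D > 0"
    by (auto simp: D_def add_pos_nonneg add_nonneg_pos)
  \<comment> \<open>\<open>c\<close> is the orthogonal coordinate of \<open>y\<close> along \<open>v = (x\<^sub>1, -2 x\<^sub>2, -x\<^sub>1)\<close>; note \<open>v \<bullet> v = 2 D\<close>\<close>
  define c where "c = (x$1 * (y$1 - y$3) - 4 * x$2 * y$2) / (2 * D)"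
  have "c * x$1 = (y$1 - y$3) / 2"
  proof -
    have "(x$1 * (y$1 - y$3) - 4 * x$2 * y$2) * x$1
        = (y$1 - y$3) * D - 4 * x$2 * (x$1 * y$2 + x$2 * (y$1 - y$3))"
      by (simp add: D_def power2_eq_square algebra_simps)
    then show ?thesis
      using \<open>D > 0\<close> unfolding h by (simp add: c_def field_simps)
  qed
  moreover have "c * x$2 = - y$2 / 2"
  proof -
    have "(x$1 * (y$1 - y$3) - 4 * x$2 * y$2) * x$2
        = - y$2 * D + x$1 * (x$1 * y$2 + x$2 * (y$1 - y$3))"
      by (simp add: D_def power2_eq_square algebra_simps)
    then show ?thesis
      using \<open>D > 0\<close> unfolding h by (simp add: c_def field_simps)
  qed
  ultimately have "y = halfflat_param x (vector [(y$1 + y$3) / 2, c])"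
    by (simp add: halfflat_param_def vec_eq_iff forall_3 field_simps)
  then show ?thesis ..
qed

lemma halfflat_set_param:
  "halfflat_set = (\<lambda>(x, w). (pt x, pt (halfflat_param x w))) ` ((- {0}) \<times> (- {0}))"
proof
  show "halfflat_set \<subseteq> (\<lambda>(x, w). (pt x, pt (halfflat_param x w))) ` ((- {0}) \<times> (- {0}))"
  proof
    fix z assume "z \<in> halfflat_set"
    then obtain x y where z: "z = (pt x, pt y)" and "x \<noteq> 0" "y \<noteq> 0"
      and "(pencil_normal *v x) \<bullet> y = 0"
      by (auto simp: halfflat_set_pencil)
    then obtain w where "y = halfflat_param x w"
      using halfflat_param_surj by blast
    with \<open>x \<noteq> 0\<close> \<open>y \<noteq> 0\<close> show "z \<in> (\<lambda>(x, w). (pt x, pt (halfflat_param x w))) ` ((- {0}) \<times> (- {0}))"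
      using z by (auto simp: halfflat_param_eq_0_iff intro!: image_eqI[where x="(x, w)"])
  qed
  show "(\<lambda>(x, w). (pt x, pt (halfflat_param x w))) ` ((- {0}) \<times> (- {0})) \<subseteq> halfflat_set"
    unfolding halfflat_set_pencil
    using halfflat_param_eq_0_iff inner_pencil_normal_param by fastforce
qed

lemma connected_halfflat_set: "connected halfflat_set"
proof -
  have param: "(\<lambda>z. halfflat_param (fst z) (snd z)) = (\<lambda>z. (snd z)$1 *\<^sub>R vector [1, 0, 1]
      + (snd z)$2 *\<^sub>R ((fst z)$1 *\<^sub>R vector [1, 0, -1] + (fst z)$2 *\<^sub>R vector [0, -2, 0]))"
    by (simp add: fun_eq_iff halfflat_param_def vec_eq_iff forall_3)
  then have "continuous_on ((- {0}) \<times> (- {0})) (\<lambda>z. halfflat_param (fst z) (snd z))"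
    unfolding param by (intro continuous_intros)
  moreover have "(\<lambda>z. halfflat_param (fst z) (snd z)) ` ((- {0}) \<times> (- {0})) \<subseteq> - {0}"
    by (auto simp: halfflat_param_eq_0_iff)
  ultimately have "continuous_on ((- {0}) \<times> (- {0})) (\<lambda>(x, w). (pt x, pt (halfflat_param x w)))"
    unfolding case_prod_beta
    by (intro continuous_on_Pair continuous_on_compose2[OF continuous_on_pt]
        continuous_on_fst continuous_on_id) auto
  moreover have "connected ((- {0::real^2}) \<times> (- {0::real^2}))"
    by (intro connected_Times connected_punctured_universe) auto
  ultimately show ?thesis
    unfolding halfflat_set_param by (rule connected_continuous_image)
qed

lemma pt_eq_pt_101_iff:
  fixes y :: "real^3"
  assumes "y \<noteq> 0"
  shows "pt y = pt (vector [1, 0, 1]) \<longleftrightarrow> y$2 = 0 \<and> y$1 = y$3"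
proof
  assume "pt y = pt (vector [1, 0, 1])"
  then obtain c where "y = c *\<^sub>R vector [1, 0, 1]"
    using pt_eq_pt_iff[OF assms, of "vector [1, 0, 1]"] by (auto simp: vec_eq_iff forall_3)
  then show "y$2 = 0 \<and> y$1 = y$3" by simp
next
  assume y: "y$2 = 0 \<and> y$1 = y$3"
  then have "y = y$1 *\<^sub>R vector [1, 0, 1]"
    by (simp add: vec_eq_iff forall_3)
  moreover have "y$1 \<noteq> 0"
    using y assms by (auto simp: vec_eq_iff forall_3)
  ultimately show "pt y = pt (vector [1, 0, 1])"
    by (metis pt_scaleR)
qed

lemma hermitian_iff:
  fixes x :: "real^2" and y :: "real^3"
  assumes "x \<noteq> 0"
  shows "hermitian x y \<longleftrightarrow> y$2 = 0 \<and> y$1 = y$3"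
proof
  assume "hermitian x y"
  then have e1: "x$1 * y$2 + x$2 * (y$1 - y$3) = 0"
    and e2: "x$1 * (y$1 - y$3) - x$2 * y$2 = 0"
    by (auto simp: hermitian_def lam1_def lam2_def lam3_def lam4_def algebra_simps)
  have det: "x$1^2 + x$2^2 \<noteq> 0"
    using assms by (auto simp: vec_eq_iff forall_2)
  have "(x$1^2 + x$2^2) * y$2
      = x$1 * (x$1 * y$2 + x$2 * (y$1 - y$3)) - x$2 * (x$1 * (y$1 - y$3) - x$2 * y$2)"
    by (simp add: power2_eq_square algebra_simps)
  then have "y$2 = 0"
    using det unfolding e1 e2 by auto
  moreover have "(x$1^2 + x$2^2) * (y$1 - y$3)
      = x$2 * (x$1 * y$2 + x$2 * (y$1 - y$3)) + x$1 * (x$1 * (y$1 - y$3) - x$2 * y$2)"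
    by (simp add: power2_eq_square algebra_simps)
  then have "y$1 = y$3"
    using det unfolding e1 e2 by auto
  ultimately show "y$2 = 0 \<and> y$1 = y$3" ..
qed (simp add: hermitian_def lam1_def lam2_def lam3_def lam4_def)

definition ccross :: "complex^3 \<Rightarrow> complex^3 \<Rightarrow> complex^3" where
  "ccross a b = vector [a$2 * b$3 - a$3 * b$2, a$3 * b$1 - a$1 * b$3, a$1 * b$2 - a$2 * b$1]"

definition hat :: "complex^3 \<Rightarrow> complex^3^3" where
  "hat a = vector [vector [0, - a$3, a$2], vector [a$3, 0, - a$1], vector [- a$2, a$1, 0]]"

lemma hat_commutator: "hat a ** hat b - hat b ** hat a = hat (ccross a b)"
  by (simp add: vec_eq_iff forall_3 matrix_matrix_mult_def sum_3 hat_def ccross_def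
      algebra_simps)

lemma ccross_smult: "ccross (k *s a) (k *s b) = (k * k) *s ccross a b"
  by (simp add: vec_eq_iff forall_3 ccross_def algebra_simps)

lemma linear_hat: "linear hat"
  by (rule linearI) (simp_all add: vec_eq_iff forall_3 hat_def)

lemma inj_hat: "inj hat"
  by (rule injI) (simp add: vec_eq_iff forall_3 hat_def)

lemma range_hat: "range hat = {A. transpose A = - A}"
proof
  show "range hat \<subseteq> {A. transpose A = - A}"
    by (auto simp: vec_eq_iff forall_3 hat_def transpose_def)
  show "{A. transpose A = - A} \<subseteq> range hat"
  proof
    fix A :: "complex^3^3" assume "A \<in> {A. transpose A = - A}"
    then have skew_A: "transpose A = - A" by simp
    have skew: "A$j$i = - A$i$j" for i j
    proof -
      have "(transpose A)$i$j = (- A)$i$j"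
        by (simp only: skew_A)
      then show ?thesis by (simp add: transpose_def)
    qed
    have "A$i$i = 0" for i
      using skew[of i i] by simp
    then have "A = hat (vector [A$3$2, A$1$3, A$2$1])"
      using skew[of 1 2] skew[of 1 3] skew[of 2 3] by (simp add: vec_eq_iff forall_3 hat_def)
    then show "A \<in> range hat" by (rule range_eqI)
  qed
qed

lemma forall_6: "(\<forall>i::6. P i) \<longleftrightarrow> P 1 \<and> P 2 \<and> P 3 \<and> P 4 \<and> P 5 \<and> P 6"
proof (intro iffI allI)
  fix i :: 6
  assume "P 1 \<and> P 2 \<and> P 3 \<and> P 4 \<and> P 5 \<and> P 6"
  moreover have "{1, 2, 3, 4, 5, 6} = (UNIV :: 6 set)"
    by (rule card_subset_eq) simp_all
  then have "i \<in> {1, 2, 3, 4, 5, 6}"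
    by simp
  ultimately show "P i" by auto
qed simp

definition complexify :: "real^6 \<Rightarrow> complex^3" where
  "complexify X = vector [Complex (X$1) (X$2), Complex (X$3) (X$4), Complex (X$5) (X$6)]"

lemma linear_complexify: "linear complexify"
  by (rule linearI) (simp_all add: vec_eq_iff forall_3 complexify_def complex_eq_iff)

lemma inj_complexify: "inj complexify"
  by (rule injI) (simp add: vec_eq_iff forall_3 forall_6 complexify_def complex_eq_iff)

lemma surj_complexify: "surj complexify"
proof (rule surjI)
  fix u :: "complex^3"
  define X :: "real^6" where "X = (\<chi> i. if i = 1 then Re (u$1) else if i = 2 then Im (u$1)
      else if i = 3 then Re (u$2) else if i = 4 then Im (u$2)
      else if i = 5 then Re (u$3) else Im (u$3))"
  have "X$1 = Re (u$1)" "X$2 = Im (u$1)" "X$3 = Re (u$2)" "X$4 = Im (u$2)"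
    "X$5 = Re (u$3)" "X$6 = Im (u$3)"
    by (simp_all add: X_def)
  then show "complexify X = u"
    by (simp add: complexify_def vec_eq_iff forall_3 complex_eq_iff)
qed

lemma complexify_lie_bracket:
  assumes "y = c *\<^sub>R vector [1, 0, 1]"
  shows "complexify (lie_bracket x y X Y)
    = - (complex_of_real c * Complex (x$2) (x$1)) *s ccross (complexify X) (complexify Y)"
  using assms
  by (simp add: vec_eq_iff forall_3 complexify_def ccross_def complex_eq_iff lie_bracket_def
      dE_def Let_def w2_def algebra_simps)

lemma iso_so3C_if_complexify_bracket:
  assumes "k \<noteq> 0"
    and bracket: "\<And>X Y. complexify (lie_bracket x y X Y) = k *s ccross (complexify X) (complexify Y)"
  shows "iso_so3C x y"
proof -
  define \<phi> where "\<phi> = hat \<circ> (*s) k \<circ> complexify"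
  have linear_smult: "linear ((*s) k)"
    by (rule linearI) (simp_all add: vec_eq_iff algebra_simps)
  have inj_smult: "inj ((*s) k)"
    using assms(1) by (auto intro!: injI simp: vec_eq_iff)
  have surj_smult: "surj ((*s) k)"
    using assms(1) by (auto intro!: surjI[of _ "(*s) (1 / k)"] simp: vec_eq_iff)
  have "linear \<phi>"
    unfolding \<phi>_def by (intro linear_compose linear_hat linear_complexify linear_smult)
  moreover have "inj \<phi>"
    unfolding \<phi>_def by (intro inj_compose inj_hat inj_complexify inj_smult)
  moreover have "range \<phi> = {A. transpose A = - A}"
    unfolding \<phi>_def range_hat[symmetric] image_comp[symmetric] surj_complexify surj_smult ..
  moreover have "\<phi> (lie_bracket x y X Y) = \<phi> X ** \<phi> Y - \<phi> Y ** \<phi> X" for X Y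
    by (simp add: \<phi>_def hat_commutator bracket ccross_smult)
  ultimately show ?thesis
    unfolding iso_so3C_def by blast
qed

lemma iso_so3C_101:
  assumes "x \<noteq> 0" "c \<noteq> 0"
  shows "iso_so3C x (c *\<^sub>R vector [1, 0, 1])"
proof (rule iso_so3C_if_complexify_bracket)
  show "- (complex_of_real c * Complex (x$2) (x$1)) \<noteq> 0"
    using assms by (auto simp: vec_eq_iff forall_2 complex_eq_iff)
qed (rule complexify_lie_bracket[OF refl])

theorem proposition3p18:
  fixes p :: "real^3"
  assumes p_def: "p = vector [1, 0, 1]"
  shows
    \<comment> \<open>via projection onto the second factor, the half-flat set is the blow-up of RP^2
        at [1:0:1]: a homeomorphism over RP^2, induced on the RP^1 factor by a linear
        isomorphism of R^2 onto p^perp (RP^1 = the pencil of lines through [p])\<close>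
    "(\<exists>\<Phi> \<Psi> (A :: real^2 \<Rightarrow> real^3).
        homeomorphism halfflat_set (blowup p) \<Phi> \<Psi> \<and>
        (\<forall>z\<in>halfflat_set. snd (\<Phi> z) = snd z) \<and>
        linear A \<and> inj A \<and> range A = {n. n \<bullet> p = 0} \<and>
        (\<forall>x y. x \<noteq> 0 \<longrightarrow> y \<noteq> 0 \<longrightarrow> (pt x, pt y) \<in> halfflat_set \<longrightarrow>
            \<Phi> (pt x, pt y) = (pt (A x), pt y)))
     \<and> connected halfflat_set
     \<and> (\<forall>x y. x \<noteq> 0 \<longrightarrow> y \<noteq> 0 \<longrightarrow> (hermitian x y \<longleftrightarrow> pt y = pt p))
     \<and> (\<forall>x y. x \<noteq> 0 \<longrightarrow> y \<noteq> 0 \<longrightarrow> pt y = pt p \<longrightarrow> iso_so3C x y)"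
proof (intro conjI allI impI)
  show "\<exists>\<Phi> \<Psi> (A :: real^2 \<Rightarrow> real^3).
        homeomorphism halfflat_set (blowup p) \<Phi> \<Psi> \<and>
        (\<forall>z\<in>halfflat_set. snd (\<Phi> z) = snd z) \<and>
        linear A \<and> inj A \<and> range A = {n. n \<bullet> p = 0} \<and>
        (\<forall>x y. x \<noteq> 0 \<longrightarrow> y \<noteq> 0 \<longrightarrow> (pt x, pt y) \<in> halfflat_set \<longrightarrow>
            \<Phi> (pt x, pt y) = (pt (A x), pt y))"
    unfolding p_def
    using homeomorphism_halfflat_blowup matrix_vector_mul_linear inj_pencil_normal
      range_pencil_normal
    by (intro exI[of _ "\<lambda>(P, Q). (proj_map pencil_normal P, Q)"] exI conjI)
      (auto simp: proj_map_pt pencil_normal_eq_0_iff)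
  show "connected halfflat_set"
    by (rule connected_halfflat_set)
next
  fix x :: "real^2" and y :: "real^3"
  assume "x \<noteq> 0" "y \<noteq> 0"
  then show "hermitian x y \<longleftrightarrow> pt y = pt p"
    by (simp add: p_def hermitian_iff pt_eq_pt_101_iff)
  assume "pt y = pt p"
  then obtain c where "c \<noteq> 0" "y = c *\<^sub>R vector [1, 0, 1]"
    using pt_eq_pt_iff[OF \<open>y \<noteq> 0\<close>, of p] by (auto simp: p_def vec_eq_iff forall_3)
  then show "iso_so3C x y"
    using iso_so3C_101[OF \<open>x \<noteq> 0\<close>] by simp
qed

end
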